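(* Let $m\ge1$ and let $\widehat K_m$ be the finite cover of $K_{m,m}$ described below, viewed as a square subcomplex of the $2$–skeleton of $\mathcal T_{2m+1}$. Then (a) hyperplanes of $\widehat K_m$ do not self-intersect; (b) hyperplanes of $\widehat K_m$ do not self-osculate; (c) hyperplanes of $\widehat K_m$ are two-sided.
   Context: $G_{m,m}=\langle a_1,\dots,a_{2m+1}\mid [a_i,a_{i+1}]=1\ (1\le i\le m),\ a_{m+j+1}^{-1}a_ja_{m+j+1}=a_{m+j}\ (1\le j\le m)\rangle$ and $K_{m,m}$ is its presentation square complex. Let $H_n=\{0,1\}^n\subset H_{n+1}$ (append $0$), $H_n^*\subset H_{n+1}$ the tuples with last coordinate $1$, $\beta_i$ the flip of coordinate $i$, $\varphi_{k,m+k}$ the swap of coordinates $k$ and $m+k$. The right action $\pi$ of $G_{m,m}$ on $H_{2m+1}$ is defined by: $\pi(a_i)=\beta_i$ on $H_{m+1}$ ($i\le m+1$); for $k=1,\dots,m$, $\pi(a_{m+k+1})=\beta_{m+k+1}$ on $H_{m+k+1}$, and $\pi(a_j)|_{H^*_{m+k}}=\beta_{m+k+1}\circ\varphi_{k,m+k}\circ\pi(a_j)|_{H_{m+k}}\circ\varphi_{k,m+k}\circ\beta_{m+k+1}$ for $j\le m+k$. $\widehat K_m$ is the covering of $K_{m,m}$ corresponding to the stabilizer of $(0,\dots,0)$; its vertices are identified with $H_{2m+1}$, and it embeds cellularly into the $2$–skeleton of the torus $\mathcal T_{2m+1}=(\mathbb R/2\mathbb Z)^{2m+1}$ (product CW structure,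 each factor having $0$–cells $0,1$ and $1$–cells $[0,1],[1,2]$). A hyperplane of a square complex is a component of the complex formed by midcubes (midlines of squares and midpoints of edges). It self-intersects if it contains both midlines of some square; it self-osculates if two distinct dual edges share a vertex without lying in a common square; it is two-sided if there is a combinatorial map $H\times[0,1]\to X$ restricting to the identity on $H\times\{1/2\}$. *)

theory Defs
  imports Main
begin

text \<open>A square complex is given by a set of (oriented) edges, endpoint data,
 a set of squares, and for every square s and k < 4 its k-th boundary side
 sd s k = (e, fw): the edge e, traversed forwards (fw) or backwards along the
 boundary cycle.  Side k runs from corner k to corner k+1; sides k and k+2
 are opposite.  The midline number k (k < 2) of s joins the midpoints of
 sides k and k+2.\<close>

definition opp_sides :: "'s set \<Rightarrow> ('s \<Rightarrow> nat \<Rightarrow> 'e \<times> bool) \<Rightarrow> 'e \<Rightarrow> 'e \<Rightarrow> bool" where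
  "opp_sides S sd e f \<longleftrightarrow>
     (\<exists>s\<in>S. \<exists>k<4. fst (sd s k) = e \<and> fst (sd s ((k + 2) mod 4)) = f)"

text \<open>A hyperplane (component of the complex of midcubes) is recorded by the
 set of its dual edges (edge midpoints it contains).\<close>
definition hyperplanes :: "'e set \<Rightarrow> 's set \<Rightarrow> ('s \<Rightarrow> nat \<Rightarrow> 'e \<times> bool) \<Rightarrow> 'e set set" where
  "hyperplanes E S sd = {{f \<in> E. (opp_sides S sd)\<^sup>*\<^sup>* e f} | e. e \<in> E}"

text \<open>H contains both midlines of some square.\<close>
definition self_intersects :: "'s set \<Rightarrow> ('s \<Rightarrow> nat \<Rightarrow> 'e \<times> bool) \<Rightarrow> 'e set \<Rightarrow> bool" where
  "self_intersects S sd H \<longleftrightarrow> (\<exists>s\<in>S. fst (sd s 0) \<in> H \<and> fst (sd s 1) \<in> H)"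

definition self_osculates :: "'s set \<Rightarrow> ('s \<Rightarrow> nat \<Rightarrow> 'e \<times> bool) \<Rightarrow> ('e \<Rightarrow> 'v set) \<Rightarrow> 'e set \<Rightarrow> bool" where
  "self_osculates S sd ends H \<longleftrightarrow>
     (\<exists>e\<in>H. \<exists>f\<in>H. e \<noteq> f \<and> ends e \<inter> ends f \<noteq> {} \<and>
        \<not> (\<exists>s\<in>S. \<exists>k<4. \<exists>l<4. fst (sd s k) = e \<and> fst (sd s l) = f))"

text \<open>Two-sidedness: a combinatorial map H x [0,1] -> X which is the identity on
 H x {1/2}.  Such a map is given by (i) for every dual edge e, the image of the
 vertical edge e x [0,1], which is e itself with one of its two orientations:
 ori e = True means e x {0} goes to the source of e; (ii) for every midline
 (s,k) of H, the image of the square (s,k) x [0,1], which is the square s,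
 fixing the midline pointwise: \<rho> s k = True means the corner (side k) x {0}
 goes to the start corner of side k (in the boundary traversal), which forces
 (side k+2) x {0} to go to the end corner of side k+2; \<rho> s k = False is the
 reflected map.  Combinatoriality = these cell maps agree on common faces.\<close>
definition two_sided :: "'s set \<Rightarrow> ('s \<Rightarrow> nat \<Rightarrow> 'e \<times> bool) \<Rightarrow> 'e set \<Rightarrow> bool" where
  "two_sided S sd H \<longleftrightarrow>
     (\<exists>(ori::'e \<Rightarrow> bool) (\<rho>::'s \<Rightarrow> nat \<Rightarrow> bool). \<forall>s\<in>S. \<forall>k<2. fst (sd s k) \<in> H \<longrightarrow>
        ori (fst (sd s k)) = (snd (sd s k) = \<rho> s k) \<and>
        ori (fst (sd s (k + 2))) = (snd (sd s (k + 2)) = (\<not> \<rho> s k)))"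

text \<open>A 0/1-tuple of length n is encoded as the set of coordinates (in 1..n)
 equal to 1.  H_n is Pow {1..n}; H_n \<subseteq> H_{n+1} by appending a 0.\<close>

definition Hcube :: "nat \<Rightarrow> nat set set" where
  "Hcube n = {x. x \<subseteq> {1..n}}"

definition flip :: "nat \<Rightarrow> nat set \<Rightarrow> nat set" where
  "flip i x = (if i \<in> x then x - {i} else insert i x)"

definition swp :: "nat \<Rightarrow> nat \<Rightarrow> nat set \<Rightarrow> nat set" where
  "swp k l x = {n. (if n = k then l else if n = l then k else n) \<in> x}"

text \<open>piK m k j : the permutation \<pi>(a_j) on H_{m+k+1} (for j \<le> m+k+1), after
 stage k of the inductive construction (stage 0 = the base step on H_{m+1}).\<close>
fun piK :: "nat \<Rightarrow> nat \<Rightarrow> nat \<Rightarrow> nat set \<Rightarrow> nat set" where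
  "piK m 0 j x = flip j x"
| "piK m (Suc k) j x =
     (if j = m + k + 2 then flip (m + k + 2) x
      else if m + k + 2 \<in> x then
        flip (m + k + 2) (swp (k + 1) (m + k + 1) (piK m k j (swp (k + 1) (m + k + 1) (flip (m + k + 2) x))))
      else piK m k j x)"

definition act :: "nat \<Rightarrow> nat \<Rightarrow> nat set \<Rightarrow> nat set" where
  "act m j = piK m m j"

definition Kverts :: "nat \<Rightarrow> nat set set" where
  "Kverts m = Hcube (2 * m + 1)"

text \<open>Edge (v, i): the lift at v of the loop a_i, from v to v.\<pi>(a_i).\<close>
definition Kedges :: "nat \<Rightarrow> (nat set \<times> nat) set" where
  "Kedges m = Kverts m \<times> {1..2 * m + 1}"

definition Kends :: "nat \<Rightarrow> nat set \<times> nat \<Rightarrow> nat set set" where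
  "Kends m e = {fst e, act m (snd e) (fst e)}"

text \<open>Relators: r = i \<le> m gives [a_i, a_(i+1)] = a_i a_(i+1) a_i^-1 a_(i+1)^-1;
 r = m + j gives a_(m+j+1)^-1 a_j a_(m+j+1) a_(m+j)^-1.  Letters are (generator, positive?).\<close>
definition relword :: "nat \<Rightarrow> nat \<Rightarrow> (nat \<times> bool) list" where
  "relword m r =
     (if r \<le> m then [(r, True), (r + 1, True), (r, False), (r + 1, False)]
      else [(r + 1, False), (r - m, True), (r + 1, True), (r, False)])"

definition step :: "nat \<Rightarrow> nat set \<Rightarrow> nat \<times> bool \<Rightarrow> nat set" where
  "step m u l = (if snd l then act m (fst l) u else inv_into (Kverts m) (act m (fst l)) u)"

fun corner :: "nat \<Rightarrow> nat set \<Rightarrow> (nat \<times> bool) list \<Rightarrow> nat \<Rightarrow> nat set" where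
  "corner m v w 0 = v"
| "corner m v w (Suc k) = step m (corner m v w k) (w ! k)"

text \<open>Square (v, r): the lift of the relator square r based at vertex v.\<close>
definition Ksquares :: "nat \<Rightarrow> (nat set \<times> nat) set" where
  "Ksquares m = Kverts m \<times> {1..2 * m}"

definition Kside :: "nat \<Rightarrow> nat set \<times> nat \<Rightarrow> nat \<Rightarrow> (nat set \<times> nat) \<times> bool" where
  "Kside m s k =
     (let w = relword m (snd s); l = w ! k in
      if snd l then ((corner m (fst s) w k, fst l), True)
      else ((corner m (fst s) w (Suc k), fst l), False))"

end

theory Submission
  imports Defs "HOL-Combinatorics.Transposition"
begin

text \<open>Each generator a_j acts on H_(2m+1) by flipping a single coordinate, which
  depends on the point.  An edge of the cover therefore runs along one coordinate
  direction d of the torus and crosses exactly one of the two torus hyperplanes dual to d,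
  the one through x_d = 1/2 or through x_d = 3/2 according to the d-th coordinate of its
  source.  The relators are such that every square of the cover is a genuine square of
  the cube, spanned by two different directions; hence opposite sides cross the same
  torus hyperplane and adjacent sides cross different ones.  So each hyperplane of the
  cover lies in a hyperplane of the torus, and these are embedded: they contain neither
  two sides of a square nor two distinct edges at a common vertex.  Two-sidedness is
  simpler still: in every relator opposite sides are read in opposite senses, so
  orienting each edge by its generator is compatible with all squares.\<close>

section \<open>Hyperplanes detected by an invariant of edges\<close>

lemma opp_sides_invariant:
  assumes "\<forall>s\<in>S. \<forall>k<2. L (fst (sd s k)) = L (fst (sd s (k + 2)))"
    and "opp_sides S sd e f"
  shows "L e = L f"
proof -
  obtain s k where s: "s \<in> S" "k < 4" "fst (sd s k) = e" "fst (sd s ((k + 2) mod 4)) = f"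
    using assms(2) unfolding opp_sides_def by blast
  show ?thesis
  proof (cases "k < 2")
    case True
    then show ?thesis
      using assms(1) s by auto
  next
    case False
    then have "k - 2 < 2" "k - 2 + 2 = k" "(k + 2) mod 4 = k - 2"
      using s(2) by (auto simp: le_mod_geq)
    then show ?thesis
      using assms(1) s by metis
  qed
qed

lemma hyperplane_invariant:
  assumes "\<forall>s\<in>S. \<forall>k<2. L (fst (sd s k)) = L (fst (sd s (k + 2)))"
    and "H \<in> hyperplanes E S sd" "e \<in> H" "f \<in> H"
  shows "L e = L f"
proof -
  obtain e0 where H: "H = {f \<in> E. (opp_sides S sd)\<^sup>*\<^sup>* e0 f}"
    using assms(2) unfolding hyperplanes_def by blast
  have "L e0 = L f'" if "(opp_sides S sd)\<^sup>*\<^sup>* e0 f'" for f'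
    using that by induction (use opp_sides_invariant[OF assms(1)] in auto)
  moreover have "(opp_sides S sd)\<^sup>*\<^sup>* e0 e" "(opp_sides S sd)\<^sup>*\<^sup>* e0 f"
    using assms(3,4) H by auto
  ultimately show ?thesis
    by metis
qed

lemma not_self_intersects_if_invariant_separates:
  assumes "\<forall>s\<in>S. \<forall>k<2. L (fst (sd s k)) = L (fst (sd s (k + 2)))"
    and "\<forall>s\<in>S. L (fst (sd s 0)) \<noteq> L (fst (sd s 1))"
    and "H \<in> hyperplanes E S sd"
  shows "\<not> self_intersects S sd H"
  using assms hyperplane_invariant[OF assms(1,3)] unfolding self_intersects_def by blast

lemma not_self_osculates_if_invariant_separates:
  assumes "\<forall>s\<in>S. \<forall>k<2. L (fst (sd s k)) = L (fst (sd s (k + 2)))"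
    and "\<And>e f. L e = L f \<Longrightarrow> ends e \<inter> ends f \<noteq> {} \<Longrightarrow> e = f"
    and "H \<in> hyperplanes E S sd"
  shows "\<not> self_osculates S sd ends H"
  using assms hyperplane_invariant[OF assms(1,3)] unfolding self_osculates_def by blast

lemma two_sided_if_opposite_sides_reversed:
  assumes "\<forall>s\<in>S. \<forall>k<2. snd (sd s (k + 2)) = (\<not> snd (sd s k))"
  shows "two_sided S sd H"
  unfolding two_sided_def
  by (rule exI[of _ "\<lambda>_. True"], rule exI[of _ "\<lambda>s k. snd (sd s k)"]) (use assms in auto)

lemma mem_flip: "n \<in> flip i x \<longleftrightarrow> (if n = i then i \<notin> x else n \<in> x)"
  by (auto simp: flip_def)

lemma flip_flip [simp]: "flip i (flip i x) = x"
  by (auto simp: flip_def)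

lemma flip_commute: "flip i (flip j x) = flip j (flip i x)"
  by (auto simp: flip_def)

lemma flip_cancel [simp]: "flip i (flip j (flip i x)) = flip j x"
  by (auto simp: flip_def)

lemma flip_eq_flip_iff: "flip a x = flip b x \<longleftrightarrow> a = b"
  by (auto simp: flip_def split: if_splits)

lemma swp_eq_vimage: "swp k l x = transpose k l -` x"
  by (auto simp: swp_def transpose_def)

lemma swp_swp [simp]: "swp k l (swp k l x) = x"
  by (auto simp: swp_eq_vimage)

lemma swp_flip: "swp k l (flip c x) = flip (transpose k l c) (swp k l x)"
proof -
  have "transpose k l n = c \<longleftrightarrow> n = transpose k l c" for n
    by auto
  then show ?thesis
    by (auto simp: swp_eq_vimage mem_flip)
qed

fun flipped_coord :: "nat \<Rightarrow> nat \<Rightarrow> nat set \<Rightarrow> nat \<Rightarrow> nat" where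
  "flipped_coord m 0 x j = j"
| "flipped_coord m (Suc k) x j =
     (if m + k + 2 \<in> x
      then transpose (k + 1) (m + k + 1)
             (flipped_coord m k (swp (k + 1) (m + k + 1) (flip (m + k + 2) x)) j)
      else flipped_coord m k x j)"

lemma flipped_coord_high: "m + k + 1 \<le> n \<Longrightarrow> flipped_coord m k x n = n"
  by (induction k arbitrary: x) auto

lemma flipped_coord_low: "k < n \<Longrightarrow> n \<le> m \<Longrightarrow> flipped_coord m k x n = n"
  by (induction k arbitrary: x) auto

lemma flipped_coord_le: "n \<le> m + k + 1 \<Longrightarrow> flipped_coord m k x n \<le> m + k + 1"
proof (induction k arbitrary: x)
  case (Suc k)
  show ?case
  proof (cases "n = m + k + 2")
    case False
    then have "\<And>y. flipped_coord m k y n \<le> m + k + 1"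
      using Suc by simp
    then show ?thesis
      by (auto simp: transpose_def intro: le_SucI)
  qed (simp add: flipped_coord_high)
qed simp

lemma flipped_coord_pos: "1 \<le> n \<Longrightarrow> 1 \<le> flipped_coord m k x n"
  by (induction k arbitrary: x) (auto simp: transpose_def)

lemma flipped_coord_inj: "flipped_coord m k x a = flipped_coord m k x b \<Longrightarrow> a = b"
  by (induction k arbitrary: x) (auto split: if_splits dest: transpose_eq_imp_eq)

lemma piK_eq_flip: "piK m k j x = flip (flipped_coord m k x j) x"
proof (induction k arbitrary: j x)
  case (Suc k)
  show ?case
  proof (cases "j \<noteq> m + k + 2 \<and> m + k + 2 \<in> x")
    case True
    define p where "p = m + k + 2"
    define \<tau> where "\<tau> = transpose (k + 1) (m + k + 1)"
    define y where "y = swp (k + 1) (m + k + 1) (flip p x)"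
    have "piK m (Suc k) j x = flip p (swp (k + 1) (m + k + 1) (flip (flipped_coord m k y j) y))"
      using True Suc.IH by (simp add: p_def y_def)
    also have "\<dots> = flip p (flip (\<tau> (flipped_coord m k y j)) (flip p x))"
      by (simp add: swp_flip y_def \<tau>_def)
    also have "\<dots> = flip (flipped_coord m (Suc k) x j) x"
      using True by (simp add: p_def y_def \<tau>_def)
    finally show ?thesis .
  qed (auto simp: Suc.IH flipped_coord_high)
qed simp

text \<open>After a move along a_g, the generator a_h flips the coordinate that a_h' flipped
  before; both families of relators are instances of this.\<close>

definition coord_transport :: "nat \<Rightarrow> nat \<Rightarrow> nat \<Rightarrow> nat \<Rightarrow> nat \<Rightarrow> bool" where
  "coord_transport m k g h h' \<longleftrightarrow>
     (\<forall>x. flipped_coord m k (flip (flipped_coord m k x g) x) h = flipped_coord m k x h')"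

lemma coord_transport_Suc:
  assumes "g \<le> m + k + 1" "coord_transport m k g h h'"
  shows "coord_transport m (Suc k) g h h'"
  unfolding coord_transport_def
proof
  fix x
  define p where "p = m + k + 2"
  define \<tau> where "\<tau> = transpose (k + 1) (m + k + 1)"
  have below_p: "p \<noteq> \<tau> (flipped_coord m k y g)" "p \<noteq> flipped_coord m k y g" for y
    using flipped_coord_le[of g m k y] assms(1) by (auto simp: \<tau>_def p_def transpose_def)
  show "flipped_coord m (Suc k) (flip (flipped_coord m (Suc k) x g) x) h
      = flipped_coord m (Suc k) x h'"
  proof (cases "p \<in> x")
    case True
    define y where "y = swp (k + 1) (m + k + 1) (flip p x)"
    define a where "a = \<tau> (flipped_coord m k y g)"
    have a: "flipped_coord m (Suc k) x g = a" "p \<in> flip a x"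
      using True below_p by (simp_all add: a_def y_def \<tau>_def p_def mem_flip)
    have "swp (k + 1) (m + k + 1) (flip p (flip a x)) = flip (flipped_coord m k y g) y"
      by (simp add: y_def a_def \<tau>_def swp_flip flip_commute[of p])
    then have "flipped_coord m (Suc k) (flip a x) h
        = \<tau> (flipped_coord m k (flip (flipped_coord m k y g) y) h)"
      using a(2) by (simp add: \<tau>_def p_def)
    also have "\<dots> = \<tau> (flipped_coord m k y h')"
      using assms(2) by (simp add: coord_transport_def)
    also have "\<dots> = flipped_coord m (Suc k) x h'"
      using True by (simp add: y_def \<tau>_def p_def)
    finally show ?thesis
      using a(1) by simp
  next
    case False
    define a where "a = flipped_coord m k x g"
    have a: "flipped_coord m (Suc k) x g = a" "p \<notin> flip a x"
      using False below_p by (simp_all add: a_def p_def mem_flip)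
    have "flipped_coord m (Suc k) (flip a x) h = flipped_coord m k (flip a x) h"
      using a(2) by (simp add: p_def)
    also have "\<dots> = flipped_coord m k x h'"
      using assms(2) by (simp add: coord_transport_def a_def)
    also have "\<dots> = flipped_coord m (Suc k) x h'"
      using False by (simp add: p_def)
    finally show ?thesis
      using a(1) by simp
  qed
qed

lemma coord_transport_mono:
  assumes "k \<le> k'" "g \<le> m + k + 1" "coord_transport m k g h h'"
  shows "coord_transport m k' g h h'"
  using assms(1)
proof (induction k' rule: dec_induct)
  case (step n)
  then show ?case
    using coord_transport_Suc[of g m n] assms(2) by simp
qed (use assms in simp)

lemma coord_transport_self: "coord_transport m k g g g"
proof (induction k)
  case (Suc k)
  show ?case
  proof (cases "g \<le> m + k + 1")
    case False
    then show ?thesis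
      using flipped_coord_high[of m "Suc k" g] by (simp add: coord_transport_def)
  qed (use Suc coord_transport_Suc in blast)
qed (simp add: coord_transport_def)

lemma coord_transport_commuting: "g \<le> m + 1 \<Longrightarrow> coord_transport m k g h h"
  using coord_transport_mono[of 0 k g m h h] by (simp add: coord_transport_def)

lemma coord_transport_conjugation:
  assumes "1 \<le> j" "j \<le> m" "j \<le> k"
  shows "coord_transport m k j (m + j + 1) (m + j + 1)"
    and "coord_transport m k (m + j + 1) (m + j) j"
proof -
  have stage: "coord_transport m j j (m + j + 1) (m + j + 1)"
      "coord_transport m j (m + j + 1) (m + j) j"
  proof -
    obtain i where j: "j = Suc i"
      using assms by (cases j) auto
    have "flipped_coord m i y j = j" "flipped_coord m i y (m + j) = m + j" for y
      using flipped_coord_low[of i j m] flipped_coord_high[of m i "m + j"] j assms by auto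
    then have "flipped_coord m j x j = (if m + j + 1 \<in> x then m + j else j)"
        "flipped_coord m j x (m + j) = (if m + j + 1 \<in> x then j else m + j)" for x
      using j by auto
    then show "coord_transport m j j (m + j + 1) (m + j + 1)"
        "coord_transport m j (m + j + 1) (m + j) j"
      using flipped_coord_high[of m j "m + j + 1"]
      by (auto simp: coord_transport_def mem_flip)
  qed
  show "coord_transport m k j (m + j + 1) (m + j + 1)"
    using coord_transport_mono[OF assms(3) _ stage(1)] by simp
  show "coord_transport m k (m + j + 1) (m + j) j"
    using coord_transport_mono[OF assms(3) _ stage(2)] by simp
qed

section \<open>Edges of the cover and the torus hyperplanes they cross\<close>

lemma act_eq_flip: "act m g x = flip (flipped_coord m m x g) x"
  by (simp add: act_def piK_eq_flip)

lemma act_in_Kverts: "x \<in> Kverts m \<Longrightarrow> g \<in> {1..2 * m + 1} \<Longrightarrow> act m g x \<in> Kverts m"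
  using flipped_coord_le[of g m m x] flipped_coord_pos[of g m m x]
  by (auto simp: act_eq_flip Kverts_def Hcube_def flip_def)

lemma act_act [simp]: "act m g (act m g x) = x"
  using coord_transport_self[of m m g] by (simp add: act_eq_flip coord_transport_def)

lemma step_eq_act:
  assumes "x \<in> Kverts m" "g \<in> {1..2 * m + 1}"
  shows "step m x (g, b) = act m g x"
proof -
  have "inj_on (act m g) (Kverts m)"
    by (metis act_act inj_onI)
  then show ?thesis
    using inv_into_f_f[of "act m g" "Kverts m" "act m g x"] act_in_Kverts[OF assms]
    by (simp add: step_def)
qed

lemma corner_Suc_act:
  assumes "v \<in> Kverts m" "\<forall>l\<in>set w. fst l \<in> {1..2 * m + 1}" "k < length w"
  shows "corner m v w (Suc k) = act m (fst (w ! k)) (corner m v w k)"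
proof -
  have step: "corner m v w (Suc k) = act m (fst (w ! k)) (corner m v w k)"
    if "k < length w" "corner m v w k \<in> Kverts m" for k
    using that step_eq_act[of _ m "fst (w ! k)" "snd (w ! k)"] assms(2) by simp
  have "corner m v w k \<in> Kverts m" if "k \<le> length w" for k
    using that
  proof (induction k)
    case (Suc k)
    then show ?case
      using step act_in_Kverts assms(2) by simp
  qed (simp add: assms(1))
  then show ?thesis
    using step assms(3) by simp
qed

\<comment> \<open>From now on corners are computed by \<open>corner_Suc_act\<close>, not by unfolding.\<close>
declare corner.simps(2) [simp del]

definition edge_coord :: "nat \<Rightarrow> nat set \<times> nat \<Rightarrow> nat" where
  "edge_coord m e = flipped_coord m m (fst e) (snd e)"

definition torus_hyperplane :: "nat \<Rightarrow> nat set \<times> nat \<Rightarrow> nat \<times> bool" where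
  "torus_hyperplane m e = (edge_coord m e, edge_coord m e \<in> fst e)"

lemma torus_hyperplane_eq_imp_eq:
  assumes "torus_hyperplane m e = torus_hyperplane m f" "Kends m e \<inter> Kends m f \<noteq> {}"
  shows "e = f"
proof -
  obtain x i y j where e: "e = (x, i)" and f: "f = (y, j)"
    by fastforce
  define d where "d = flipped_coord m m x i"
  have d: "flipped_coord m m y j = d" "d \<in> x \<longleftrightarrow> d \<in> y"
    using assms(1) unfolding torus_hyperplane_def edge_coord_def e f d_def by auto
  have "x \<noteq> flip d y" "flip d x \<noteq> y"
    using d(2) by (auto simp: mem_flip)
  moreover have "{x, flip d x} \<inter> {y, flip d y} \<noteq> {}"
    using assms(2) d by (simp add: Kends_def act_eq_flip e f d_def)
  moreover have "flip d x = flip d y \<Longrightarrow> x = y"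
    by (metis flip_flip)
  ultimately have "x = y"
    by blast
  then show ?thesis
    using d flipped_coord_inj by (metis d_def e f)
qed

lemma relword_gens: "r \<in> {1..2 * m} \<Longrightarrow> \<forall>l\<in>set (relword m r). fst l \<in> {1..2 * m + 1}"
  by (auto simp: relword_def)

lemma relword_opposite_signs: "k < 2 \<Longrightarrow> snd (relword m r ! (k + 2)) = (\<not> snd (relword m r ! k))"
  by (auto simp: relword_def less_2_cases_iff)

lemma Kside_opposite_signs:
  "\<forall>s\<in>Ksquares m. \<forall>k<2. snd (Kside m s (k + 2)) = (\<not> snd (Kside m s k))"
  using relword_opposite_signs by (simp add: Kside_def Let_def)

lemma length_relword [simp]: "length (relword m r) = 4"
  by (simp add: relword_def)

lemma Ksquare_corner_Suc:
  assumes "(v, r) \<in> Ksquares m" "k < 4"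
  shows "corner m v (relword m r) (k + 1)
           = act m (fst (relword m r ! k)) (corner m v (relword m r) k)"
  using corner_Suc_act[of v m "relword m r" k] relword_gens[of r m] assms
  by (simp add: Ksquares_def)

definition cube_corners :: "nat \<Rightarrow> nat set \<Rightarrow> nat \<Rightarrow> nat \<Rightarrow> nat \<Rightarrow> bool" where
  "cube_corners m v r a b \<longleftrightarrow> a \<noteq> b \<and>
     corner m v (relword m r) 1 = flip a v \<and>
     corner m v (relword m r) 2 = flip b (flip a v) \<and>
     corner m v (relword m r) 3 = flip b v \<and>
     corner m v (relword m r) 4 = v"

lemma cube_corners_commutator:
  assumes sq: "(v, r) \<in> Ksquares m" and "r \<le> m"
  shows "cube_corners m v r (flipped_coord m m v r) (flipped_coord m m v (r + 1))"
proof -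
  let ?c = "flipped_coord m m" and ?w = "relword m r"
  define a where "a = ?c v r"
  define b where "b = ?c v (r + 1)"
  have w: "?w = [(r, True), (r + 1, True), (r, False), (r + 1, False)]"
    using assms by (simp add: relword_def)
  have corner: "corner m v ?w (k + 1) = act m (fst (?w ! k)) (corner m v ?w k)" if "k < 4" for k
    using Ksquare_corner_Suc[OF sq that] .
  have ab: "?c (flip a v) (r + 1) = b" "?c (flip b v) r = a"
    using coord_transport_commuting[of r m m "r + 1"] coord_transport_commuting[of "r + 1" m m r]
      assms by (simp_all add: coord_transport_def a_def b_def)
  have c1: "corner m v ?w 1 = flip a v"
    using corner[of 0] by (simp add: w act_eq_flip a_def)
  have c2: "corner m v ?w 2 = flip b (flip a v)"
    using corner[of 1] c1 ab by (simp add: w act_eq_flip numeral_eq_Suc)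
  have "?c (flip a (flip b v)) r = a"
    using coord_transport_self[of m m r] ab by (metis coord_transport_def)
  then have c3: "corner m v ?w 3 = flip b v"
    using corner[of 2] c2 by (simp add: w act_eq_flip flip_commute[of b] numeral_eq_Suc)
  have "?c (flip b v) (r + 1) = b"
    using coord_transport_self[of m m "r + 1"] by (simp add: coord_transport_def b_def)
  then have c4: "corner m v ?w 4 = v"
    using corner[of 3] c3 by (simp add: w act_eq_flip numeral_eq_Suc)
  have "a \<noteq> b"
    using flipped_coord_inj by (fastforce simp: a_def b_def)
  then show ?thesis
    using c1 c2 c3 c4 by (simp add: cube_corners_def a_def b_def)
qed

lemma cube_corners_conjugation:
  assumes sq: "(v, m + j) \<in> Ksquares m" and "1 \<le> j"
  defines "u \<equiv> act m (m + j + 1) v"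
  shows "cube_corners m v (m + j) (flipped_coord m m u (m + j + 1)) (flipped_coord m m u j)"
proof -
  let ?c = "flipped_coord m m" and ?w = "relword m (m + j)"
  define q where "q = m + j + 1"
  define a where "a = ?c u q"
  define b where "b = ?c u j"
  have j: "j \<le> m"
    using sq by (simp add: Ksquares_def)
  have w: "?w = [(q, False), (j, True), (q, True), (m + j, False)]"
    using assms by (simp add: relword_def q_def)
  have corner: "corner m v ?w (k + 1) = act m (fst (?w ! k)) (corner m v ?w k)" if "k < 4" for k
    using Ksquare_corner_Suc[OF sq that] .
  have v: "v = flip a u" and u: "u = flip a v"
    using coord_transport_self[of m m q]
    by (simp_all add: coord_transport_def u_def a_def q_def act_eq_flip)
  have c1: "corner m v ?w 1 = flip a v"
    using corner[of 0] by (simp add: w u_def q_def u[symmetric])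
  have c2: "corner m v ?w 2 = flip b (flip a v)"
    using corner[of 1] c1 by (simp add: w act_eq_flip b_def u[symmetric] numeral_eq_Suc)
  have "?c (flip b u) q = a"
    using coord_transport_conjugation(1)[OF assms(2) j j]
    by (simp add: coord_transport_def a_def b_def q_def)
  moreover have "flip a (flip b u) = flip b v"
    using v by (simp add: flip_commute[of a])
  ultimately have c3: "corner m v ?w 3 = flip b v"
    using corner[of 2] c2
    by (simp add: w act_eq_flip flip_commute[of b] u[symmetric] numeral_eq_Suc)
  have "?c v (m + j) = b"
    using coord_transport_conjugation(2)[OF assms(2) j j] v
    by (simp add: coord_transport_def a_def b_def q_def)
  then have "?c (flip b v) (m + j) = b"
    using coord_transport_self[of m m "m + j"] by (metis coord_transport_def)
  then have c4: "corner m v ?w 4 = v"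
    using corner[of 3] c3 by (simp add: w act_eq_flip numeral_eq_Suc)
  have "a \<noteq> b"
    using flipped_coord_inj assms(2) by (fastforce simp: a_def b_def q_def)
  then show ?thesis
    using c1 c2 c3 c4 by (simp add: cube_corners_def a_def b_def q_def)
qed

lemma Ksquare_cube_corners:
  assumes "(v, r) \<in> Ksquares m"
  shows "\<exists>a b. cube_corners m v r a b"
proof (cases "r \<le> m")
  case True
  then show ?thesis
    using assms cube_corners_commutator by blast
next
  case False
  then have "r = m + (r - m)" "1 \<le> r - m"
    by auto
  then show ?thesis
    using assms cube_corners_conjugation[of v m "r - m"] by metis
qed

lemma Kside_source:
  "fst (fst (Kside m (v, r) k))
     = corner m v (relword m r) (if snd (relword m r ! k) then k else k + 1)"
  by (simp add: Kside_def Let_def)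

text \<open>Side k traverses its edge from corner k to corner k + 1, forwards or backwards;
  either way the edge flips the coordinate in which the two corners differ.\<close>

lemma Kside_edge_coord:
  assumes sq: "(v, r) \<in> Ksquares m" and k: "k < 4"
    and d: "corner m v (relword m r) (k + 1) = flip d (corner m v (relword m r) k)"
  shows "edge_coord m (fst (Kside m (v, r) k)) = d"
proof -
  let ?w = "relword m r" and ?g = "fst (relword m r ! k)"
  have fwd: "act m ?g (corner m v ?w k) = flip d (corner m v ?w k)"
    using Ksquare_corner_Suc[OF sq k] d by simp
  then have bwd: "act m ?g (flip d (corner m v ?w k)) = corner m v ?w k"
    by (metis act_act)
  show ?thesis
    using fwd bwd d
    by (auto simp: Kside_def Let_def edge_coord_def act_eq_flip flip_eq_flip_iff
        dest: arg_cong[of _ _ "flip d"])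
qed

lemma Ksquare_torus_hyperplanes:
  assumes "s \<in> Ksquares m"
  shows "\<forall>k<2. torus_hyperplane m (fst (Kside m s k))
                = torus_hyperplane m (fst (Kside m s (k + 2)))"
    and "edge_coord m (fst (Kside m s 0)) \<noteq> edge_coord m (fst (Kside m s 1))"
proof -
  obtain v r where s: "s = (v, r)"
    by fastforce
  obtain a b where c: "cube_corners m v r a b"
    using Ksquare_cube_corners assms s by blast
  let ?w = "relword m r"
  have "corner m v ?w (0 + 1) = flip a (corner m v ?w 0)"
      "corner m v ?w (1 + 1) = flip b (corner m v ?w 1)"
      "corner m v ?w (2 + 1) = flip a (corner m v ?w 2)"
      "corner m v ?w (3 + 1) = flip b (corner m v ?w 3)"
    using c by (simp_all add: cube_corners_def flip_commute[of a] numeral_eq_Suc)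
  then have coords: "edge_coord m (fst (Kside m s 0)) = a" "edge_coord m (fst (Kside m s 1)) = b"
      "edge_coord m (fst (Kside m s 2)) = a" "edge_coord m (fst (Kside m s 3)) = b"
    using Kside_edge_coord[OF assms[unfolded s]] by (simp_all add: s)
  have signs: "snd (?w ! 2) = (\<not> snd (?w ! 0))" "snd (?w ! 3) = (\<not> snd (?w ! 1))"
    using relword_opposite_signs[of 0 m r] relword_opposite_signs[of 1 m r]
    by (simp_all add: numeral_eq_Suc)
  have "torus_hyperplane m (fst (Kside m s 0)) = torus_hyperplane m (fst (Kside m s 2))"
    using c coords signs(1)
    by (cases "snd (?w ! 0)")
      (simp_all add: s torus_hyperplane_def cube_corners_def mem_flip Kside_source)
  moreover have "torus_hyperplane m (fst (Kside m s 1)) = torus_hyperplane m (fst (Kside m s 3))"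
    using c coords signs(2)
    by (cases "snd (?w ! 1)")
      (simp_all add: s torus_hyperplane_def cube_corners_def mem_flip Kside_source numeral_eq_Suc)
  ultimately show "\<forall>k<2. torus_hyperplane m (fst (Kside m s k))
                = torus_hyperplane m (fst (Kside m s (k + 2)))"
    by (auto simp: less_Suc_eq numeral_eq_Suc)
  show "edge_coord m (fst (Kside m s 0)) \<noteq> edge_coord m (fst (Kside m s 1))"
    using c coords by (simp add: cube_corners_def)
qed

theorem proposition6p4:
  fixes m :: nat
  assumes "m \<ge> 1"
  shows "(\<forall>H \<in> hyperplanes (Kedges m) (Ksquares m) (Kside m).
            \<not> self_intersects (Ksquares m) (Kside m) H)
       \<and> (\<forall>H \<in> hyperplanes (Kedges m) (Ksquares m) (Kside m).
            \<not> self_osculates (Ksquares m) (Kside m) (Kends m) H)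
       \<and> (\<forall>H \<in> hyperplanes (Kedges m) (Ksquares m) (Kside m).
            two_sided (Ksquares m) (Kside m) H)"
proof (intro conjI ballI)
  fix H
  assume H: "H \<in> hyperplanes (Kedges m) (Ksquares m) (Kside m)"
  have opposite: "\<forall>s\<in>Ksquares m. \<forall>k<2. torus_hyperplane m (fst (Kside m s k))
                     = torus_hyperplane m (fst (Kside m s (k + 2)))"
    using Ksquare_torus_hyperplanes(1) by blast
  have adjacent: "\<forall>s\<in>Ksquares m. torus_hyperplane m (fst (Kside m s 0))
                     \<noteq> torus_hyperplane m (fst (Kside m s 1))"
    using Ksquare_torus_hyperplanes(2) by (simp add: torus_hyperplane_def)
  show "\<not> self_intersects (Ksquares m) (Kside m) H"
    using not_self_intersects_if_invariant_separates[OF opposite adjacent H] .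
  show "\<not> self_osculates (Ksquares m) (Kside m) (Kends m) H"
    using not_self_osculates_if_invariant_separates[OF opposite torus_hyperplane_eq_imp_eq H] .
  show "two_sided (Ksquares m) (Kside m) H"
    using two_sided_if_opposite_sides_reversed[OF Kside_opposite_signs] .
qed

end
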